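(* Consider the online convex optimization protocol and the algorithm AOD described in the context, with known horizon $T$, under the standing assumptions (A1)–(A3). Then for any comparator sequence $\mathbf{u}_1,\ldots,\mathbf{u}_{T+1}\in\Omega$, with path-length $P_T=\sum_{t=1}^T\|\mathbf{u}_{t+1}-\mathbf{u}_t\|_2$, \[ \sum_{t=1}^T f_t(\mathbf{w}_t)-\sum_{t=1}^T f_t(\mathbf{u}_t)\le\Big(\frac{3DG}{2}+\frac{5G}{2}\sqrt{DP_T}+\sqrt{6c(T)\Big(1+\frac{2P_T}{D}\Big)}\Big)\sqrt{T}=O\big(\sqrt{T(1+P_T)\log T}\big), \] where $c(T)=1+\ln T+\ln(1+\log_2 T)+\ln\frac{5+3\ln(1+T)}{2}$.
   Context: Online convex optimization: $\Omega\subseteq\mathbb{R}^d$ is convex; in round $t=1,\ldots,T$ the learner plays $\mathbf{w}_t\in\Omega$ and then a convex $f_t:\Omega\to\mathbb{R}$ is revealed. Standing assumptions: (A1) $\|\nabla f_t(\mathbf{w})\|_2\le G$ for all $\mathbf{w}\in\Omega$, $t\in[T]$ ($\nabla$ a (sub)gradient); (A2) $\mathbf{0}\in\Omega$ and $\max_{\mathbf{w},\mathbf{w}'\in\Omega}\|\mathbf{w}-\mathbf{w}'\|_2\le D$; (A3) $0\le f_t(\mathbf{w})\le1$ for all $\mathbf{w}\in\Omega$, $t\in[T]$. $\Pi_\Omega$ is Euclidean projection onto $\Omega$. Dense geometric covering intervals: $\mathcal{D}=\bigcup_{k\ge0,\,2^k\le T}\mathcal{D}_k$, $\mathcal{D}_k=\{I_k^i=[(i-1)2^k+1,\,i2^k]: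 i=1,2,\ldots\}$. Algorithm AOD: for each $I\in\mathcal{D}$ there is an expert $E_I$ running online gradient descent with step size $\eta_I=D/(G\sqrt{|I|})$ during the rounds $t\in I$, producing $\mathbf{w}_{t,I}\in\Omega$ for $t\in I$ (with $\mathbf{w}_{t+1,I}=\Pi_\Omega[\mathbf{w}_{t,I}-\eta_I\nabla f_t(\mathbf{w}_{t,I})]$). Its initial point $\mathbf{w}_{\min I,I}$ is arbitrary in $\Omega$ if $\min I=1$; otherwise (warm start) it is the iterate of the expert $E_J$ of the preceding interval $J=[\min I-|I|,\min I-1]\in\mathcal{D}$ after processing $f_{\min I-1}$, i.e. $\Pi_\Omega[\mathbf{w}_{\min I-1,J}-\eta_J\nabla f_{\min I-1}(\mathbf{w}_{\min I-1,J})]$. In round $t$ the active experts are $\mathcal{A}_t=\{E_I: I\in\mathcal{D}, t\in I\}$. Meta-algorithm (AdaNormalHedge): with $\Phi(R,C)=\exp([R]_+^2/(3C))$, $[x]_+=\max(0,x)$, $\Phi(0,0)=1$, $w(R,C)=\tfrac12(\Phi(R+1,C+1)-\Phi(R-1,C+1))$, $R_{t-1,I}=\sum_{u=\min I}^{t-1}(f_u(\mathbf{w}_u)-f_u(\mathbf{w}_{u,I}))$, $C_{t-1,I}=\sum_{u=\min I}^{t-1}|f_u(\mathbf{w}_u)-f_u(\mathbf{w}_{u,I})|$, weights $p_{t,I}=w(R_{t-1,I},C_{t-1,I})/\sum_{E_{I'}\in\mathcal{A}_t}w(R_{t-1,I'},C_{t-1,I'})$, and played point $\mathbf{w}_t=\sum_{E_I\in\mathcal{A}_t}p_{t,I}\mathbf{w}_{t,I}$.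 *)

theory Defs
  imports "HOL-Analysis.Analysis"
begin

(* Rounds are t = 1..T.  Interval I_k^i = [(i-1)2^k+1, i 2^k], for k with 2^k <= T and i >= 1. *)
definition intv :: "nat \<Rightarrow> nat \<Rightarrow> nat set" where
  "intv k i = {(i - 1) * 2 ^ k + 1 .. i * 2 ^ k}"

definition active :: "nat \<Rightarrow> nat \<Rightarrow> (nat \<times> nat) set" where
  "active T t = {(k, i). 2 ^ k \<le> T \<and> 1 \<le> i \<and> t \<in> intv k i}"

(* step size eta_I = D / (G sqrt |I|), |I_k^i| = 2^k *)
definition eta :: "real \<Rightarrow> real \<Rightarrow> nat \<Rightarrow> real" where
  "eta D G k = D / (G * sqrt (2 ^ k))"

definition ogd_step :: "'a::euclidean_space set \<Rightarrow> (nat \<Rightarrow> 'a \<Rightarrow> 'a) \<Rightarrow> real \<Rightarrow> real \<Rightarrow> nat \<Rightarrow> nat \<Rightarrow> 'a \<Rightarrow> 'a" where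
  "ogd_step \<Omega> g D G k t x = closest_point \<Omega> (x - eta D G k *\<^sub>R g t x)"

(* expert k i t = w_{t, I_k^i}, meaningful for t in I_k^i.  At the first round of I_k^i:
   the arbitrary initial point init k if i = 1, otherwise warm start from the expert of the
   preceding interval I_k^(i-1) after processing f_{min I - 1}. *)
primrec expert :: "'a::euclidean_space set \<Rightarrow> (nat \<Rightarrow> 'a \<Rightarrow> 'a) \<Rightarrow> real \<Rightarrow> real \<Rightarrow> (nat \<Rightarrow> 'a)
                    \<Rightarrow> nat \<Rightarrow> nat \<Rightarrow> nat \<Rightarrow> 'a" where
  "expert \<Omega> g D G init k i 0 = init k"
| "expert \<Omega> g D G init k i (Suc t) =
     (if Suc t = (i - 1) * 2 ^ k + 1
      then (if i = 1 then init k
            else ogd_step \<Omega> g D G k t (expert \<Omega> g D G init k (i - 1) t))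
      else ogd_step \<Omega> g D G k t (expert \<Omega> g D G init k i t))"

definition Phi :: "real \<Rightarrow> real \<Rightarrow> real" where
  "Phi R C = (if R = 0 \<and> C = 0 then 1 else exp ((max 0 R)\<^sup>2 / (3 * C)))"

definition wANH :: "real \<Rightarrow> real \<Rightarrow> real" where
  "wANH R C = (Phi (R + 1) (C + 1) - Phi (R - 1) (C + 1)) / 2"

(* R_{t-1,I} and C_{t-1,I} for I = I_k^i, given the learner's past plays W and expert plays E *)
definition Rsum :: "(nat \<Rightarrow> 'a \<Rightarrow> real) \<Rightarrow> (nat \<Rightarrow> 'a) \<Rightarrow> (nat \<Rightarrow> nat \<Rightarrow> nat \<Rightarrow> 'a)
                    \<Rightarrow> nat \<Rightarrow> nat \<Rightarrow> nat \<Rightarrow> real" where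
  "Rsum f W E k i t = (\<Sum>u \<in> {(i - 1) * 2 ^ k + 1 ..< t}. f u (W u) - f u (E k i u))"

definition Csum :: "(nat \<Rightarrow> 'a \<Rightarrow> real) \<Rightarrow> (nat \<Rightarrow> 'a) \<Rightarrow> (nat \<Rightarrow> nat \<Rightarrow> nat \<Rightarrow> 'a)
                    \<Rightarrow> nat \<Rightarrow> nat \<Rightarrow> nat \<Rightarrow> real" where
  "Csum f W E k i t = (\<Sum>u \<in> {(i - 1) * 2 ^ k + 1 ..< t}. \<bar>f u (W u) - f u (E k i u)\<bar>)"

(* the point played by the meta-algorithm in round t, given the past plays W (only W u, u < t, used) *)
definition meta_point :: "(nat \<Rightarrow> 'a::euclidean_space \<Rightarrow> real) \<Rightarrow> (nat \<Rightarrow> nat \<Rightarrow> nat \<Rightarrow> 'a)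
                          \<Rightarrow> nat \<Rightarrow> (nat \<Rightarrow> 'a) \<Rightarrow> nat \<Rightarrow> 'a" where
  "meta_point f E T W t =
     (let wt = (\<lambda>(k, i). wANH (Rsum f W E k i t) (Csum f W E k i t));
          Z = (\<Sum>I \<in> active T t. wt I)
      in (\<Sum>(k, i) \<in> active T t. (wt (k, i) / Z) *\<^sub>R E k i t))"

(* plays n = the learner's plays w_1..w_n (entries beyond n are junk) *)
primrec plays :: "(nat \<Rightarrow> 'a::euclidean_space \<Rightarrow> real) \<Rightarrow> (nat \<Rightarrow> nat \<Rightarrow> nat \<Rightarrow> 'a)
                   \<Rightarrow> nat \<Rightarrow> nat \<Rightarrow> nat \<Rightarrow> 'a" where
  "plays f E T 0 = (\<lambda>_. 0)"
| "plays f E T (Suc n) = (plays f E T n)(Suc n := meta_point f E T (plays f E T n) (Suc n))"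

definition aod :: "'a::euclidean_space set \<Rightarrow> (nat \<Rightarrow> 'a \<Rightarrow> real) \<Rightarrow> (nat \<Rightarrow> 'a \<Rightarrow> 'a)
                   \<Rightarrow> real \<Rightarrow> real \<Rightarrow> (nat \<Rightarrow> 'a) \<Rightarrow> nat \<Rightarrow> nat \<Rightarrow> 'a" where
  "aod \<Omega> f g D G init T t = plays f (expert \<Omega> g D G init) T t t"

definition cT :: "nat \<Rightarrow> real" where
  "cT T = 1 + ln (real T) + ln (1 + log 2 (real T)) + ln ((5 + 3 * ln (1 + real T)) / 2)"

end

theory Submission
  imports Defs "HOL-Probability.Hoeffding"
begin

text \<open>Fix a level \<open>k\<close> of the covering. Its intervals partition \<open>[1, T]\<close>, and on each of them the
  regret of AOD is the regret \<open>R\<^sub>I\<close> of the meta-algorithm against the expert \<open>E\<^sub>I\<close> plus the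
  dynamic regret of \<open>E\<^sub>I\<close>. In every round the AdaNormalHedge weights make the weighted instantaneous
  regrets sum to at most \<open>0\<close> (Jensen), so the potential \<open>\<Sum>\<^sub>I \<Phi>(R\<^sub>I, C\<^sub>I)\<close> grows by at most
  \<open>5/2 |r| / (C + 1)\<close> per step and stays below \<open>exp (c(T))\<close>; this gives \<open>R\<^sub>I \<le> \<surd>(3 |I| c(T))\<close>.
  Projected gradient descent with step size \<open>D / (G \<surd>|I|)\<close> has dynamic regret at most
  \<open>D G \<surd>|I| + G \<surd>|I| P\<^sub>I\<close> on \<open>I\<close>. Summing over the level with Cauchy-Schwarz and taking the
  largest \<open>k\<close> with \<open>2\<^sup>k P\<^sub>T \<le> 2 T D\<close> yields the bound.\<close>

section \<open>The AdaNormalHedge potential\<close>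

text \<open>The special case \<open>\<Phi>(0, 0) = 1\<close> of the definition is subsumed, since \<open>0 / 0 = 0\<close>.\<close>
lemma Phi_eq_exp: "Phi R C = exp ((max 0 R)\<^sup>2 / (3 * C))"
  by (simp add: Phi_def)

lemma power2_add_divide_le:
  fixes a b x y :: real
  assumes "x \<ge> 0" "y > 0" "x = 0 \<Longrightarrow> a = 0"
  shows "(a + b)\<^sup>2 / (x + y) \<le> a\<^sup>2 / x + b\<^sup>2 / y"
proof (cases "x = 0")
  case True
  then show ?thesis using assms by simp
next
  case False
  then have "x > 0" using assms by simp
  moreover have "(a + b)\<^sup>2 * (x * y) \<le> (a\<^sup>2 * y + b\<^sup>2 * x) * (x + y)"
    using sum_squares_ge_zero[of "a * y - b * x" 0] by (simp add: power2_eq_square algebra_simps)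
  ultimately show ?thesis using assms(2) by (simp add: field_simps)
qed

text \<open>The map \<open>(R, C) \<mapsto> [R]\<^sub>+\<^sup>2 / C\<close> is jointly convex (a perspective), and \<open>exp\<close> is
  convex and increasing.\<close>
lemma Phi_convex_step:
  fixes R C l s :: real
  assumes C: "C \<ge> 0" "\<bar>R\<bar> \<le> C" and l: "0 \<le> l" "l \<le> 1"
  shows "Phi (R + l * s) (C + l) \<le> (1 - l) * Phi R C + l * Phi (R + s) (C + 1)"
proof (cases "l = 0")
  case True
  then show ?thesis by simp
next
  case False
  with l have l0: "l > 0" by simp
  have scale: "(a * x)\<^sup>2 / (a * y) = a * (x\<^sup>2 / y)" for a x y :: real
    by (cases "a = 0") (simp_all add: power2_eq_square)
  define p q where "p = max 0 R" and "q = max 0 (R + s)"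
  have "R + l * s = (1 - l) * R + l * (R + s)" by algebra
  also have "\<dots> \<le> (1 - l) * p + l * q"
    using l by (intro add_mono mult_left_mono) (auto simp: p_def q_def)
  finally have "max 0 (R + l * s) \<le> (1 - l) * p + l * q"
    using l by (auto simp: p_def q_def)
  then have "(max 0 (R + l * s))\<^sup>2 \<le> ((1 - l) * p + l * q)\<^sup>2"
    by (rule power_mono) simp
  then have "(max 0 (R + l * s))\<^sup>2 / (3 * (C + l)) \<le> ((1 - l) * p + l * q)\<^sup>2 / (3 * (C + l))"
    using C l0 by (intro divide_right_mono) auto
  also have "\<dots> = ((1 - l) * p + l * q)\<^sup>2 / ((1 - l) * (3 * C) + l * (3 * (C + 1)))"
    by (simp add: algebra_simps)
  also have "\<dots> \<le> ((1 - l) * p)\<^sup>2 / ((1 - l) * (3 * C)) + (l * q)\<^sup>2 / (l * (3 * (C + 1)))"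
    using l l0 C by (intro power2_add_divide_le) (auto simp: p_def)
  also have "\<dots> = (1 - l) * (p\<^sup>2 / (3 * C)) + l * (q\<^sup>2 / (3 * (C + 1)))"
    using scale by simp
  finally have "Phi (R + l * s) (C + l) \<le> exp ((1 - l) * (p\<^sup>2 / (3 * C)) + l * (q\<^sup>2 / (3 * (C + 1))))"
    by (simp add: Phi_eq_exp)
  also have "\<dots> \<le> (1 - l) * exp (p\<^sup>2 / (3 * C)) + l * exp (q\<^sup>2 / (3 * (C + 1)))"
    using convex_onD[OF exp_convex, of l "p\<^sup>2 / (3 * C)" "q\<^sup>2 / (3 * (C + 1))"] l by simp
  finally show ?thesis by (simp add: Phi_eq_exp p_def q_def)
qed

lemma exp_diff_le: "exp b - exp a \<le> exp b * (b - a)" for a b :: real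
proof -
  have "exp b * (1 + (a - b)) \<le> exp b * exp (a - b)"
    by (simp add: exp_ge_add_one_self)
  then show ?thesis by (simp add: exp_diff algebra_simps)
qed

lemma exp_5_3_le: "exp (5 / 3 :: real) \<le> 15 / 2"
proof -
  have "exp (1 / 3 :: real) \<le> 13 / 9"
    using exp_bound[of "1 / 3"] by (simp add: power2_eq_square)
  then have "exp (1 / 3 :: real) ^ 5 \<le> (13 / 9) ^ 5"
    by (rule power_mono) simp
  then show ?thesis
    using exp_of_nat_mult[of 5 "1 / 3 :: real"] by (simp add: power_divide)
qed

lemma Phi_mean_le_nonpos:
  fixes R C :: real
  assumes C: "C \<ge> 0" and R: "R \<le> 0"
  shows "(Phi (R + 1) (C + 1) + Phi (R - 1) (C + 1)) / 2 \<le> Phi R C + 5 / (2 * (C + 1))"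
proof -
  define y where "y = (max 0 (R + 1))\<^sup>2 / (3 * (C + 1))"
  have "(max 0 (R + 1))\<^sup>2 \<le> 1"
    using R by (intro power_le_one) auto
  then have y: "0 \<le> y" "y \<le> 1 / (3 * (C + 1))"
    using C by (auto simp: y_def divide_right_mono)
  moreover have "1 / (3 * (C + 1)) \<le> 1"
    using C by simp
  ultimately have "exp y \<le> 1 + y + y\<^sup>2"
    by (intro exp_bound) auto
  also have "y\<^sup>2 \<le> y"
    using y \<open>1 / (3 * (C + 1)) \<le> 1\<close> by (simp add: power2_eq_square mult_left_le)
  finally have "exp y \<le> 1 + 2 * y" by simp
  moreover have "1 / (3 * (C + 1)) \<le> 5 / (2 * (C + 1))"
    using C by (simp add: field_simps)
  moreover have "Phi (R + 1) (C + 1) = exp y" "Phi (R - 1) (C + 1) = 1" "Phi R C = 1"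
    using R by (simp_all add: Phi_eq_exp y_def)
  ultimately show ?thesis
    using y by simp
qed

lemma Phi_mean_le_small:
  fixes R C :: real
  assumes C: "R \<le> C" and R: "0 < R" "R < 1"
  shows "(Phi (R + 1) (C + 1) + Phi (R - 1) (C + 1)) / 2 \<le> Phi R C + 5 / (2 * (C + 1))"
proof -
  define c where "c = C + 1"
  have c: "c \<ge> 1" "R + 1 \<le> c"
    using C R by (simp_all add: c_def)
  define a b where "a = R\<^sup>2 / (3 * c)" and "b = (R + 1)\<^sup>2 / (3 * c)"
  have "1 \<le> exp a"
    using c by (simp add: a_def)
  have "exp a \<le> Phi R C"
    using C R by (simp add: Phi_eq_exp a_def c_def max_def frac_le)
  have "b - a = (2 * R + 1) / (3 * c)"
    using c by (simp add: a_def b_def field_simps power2_eq_square)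
  then have ab: "0 \<le> b - a" "b - a \<le> 1 / c"
    using c R by (simp, simp add: field_simps)
  have "(R + 1) * (R + 1) \<le> 2 * (R + 1)"
    using R by (intro mult_right_mono) auto
  also have "\<dots> \<le> 2 * c"
    using c by simp
  finally have "b \<le> (2 * c) / (3 * c)"
    unfolding b_def power2_eq_square using c by (intro divide_right_mono) auto
  also have "\<dots> = 2 / 3"
    using c by simp
  finally have "exp b \<le> exp (2 / 3)" by simp
  also have "exp (2 / 3 :: real) \<le> 1 + 2 / 3 + (2 / 3)\<^sup>2"
    by (rule exp_bound) auto
  finally have "exp b \<le> 5" by (simp add: power2_eq_square)
  then have "exp b * (b - a) \<le> 5 * (1 / c)"
    using ab by (intro mult_mono) auto
  then have "exp b + 1 \<le> 2 * Phi R C + 5 / c"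
    using exp_diff_le[of b a] \<open>exp a \<le> Phi R C\<close> \<open>1 \<le> exp a\<close> by linarith
  moreover have "Phi (R + 1) (C + 1) = exp b" "Phi (R - 1) (C + 1) = 1"
    using R by (simp_all add: Phi_eq_exp b_def c_def max_def)
  ultimately show ?thesis
    using c by (simp add: c_def field_simps)
qed

lemma one_plus_exp_half_le: "h \<ge> 0 \<Longrightarrow> (1 + exp h) / 2 \<le> exp (h / 2 + h\<^sup>2 / 8)"
  for h :: real
proof -
  assume "h \<ge> 0"
  then have "ln ((1 + exp h) / 2) \<le> h / 2 + h\<^sup>2 / 8"
    using Hoeffdings_lemma_aux[of h "1 / 2"] by (simp add: field_simps)
  moreover have "(1 + exp h) / 2 = exp (ln ((1 + exp h) / 2))"
    by (simp add: add_pos_pos)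
  ultimately show ?thesis by (metis exp_le_cancel_iff)
qed

lemma inverse_add_inverse_power2_le: "C > 0 \<Longrightarrow> 1 / (C + 1) + 1 / (C + 1)\<^sup>2 \<le> 1 / C"
  for C :: real
proof -
  assume "C > 0"
  then have "1 / (C + 1)\<^sup>2 \<le> 1 / (C * (C + 1))"
    by (intro divide_left_mono) (simp_all add: power2_eq_square)
  moreover have "1 / C - 1 / (C + 1) = 1 / (C * (C + 1))"
    using \<open>C > 0\<close> by (simp add: field_simps)
  ultimately show ?thesis by simp
qed

lemma power2_le_of_power2_less:
  fixes R C :: real
  assumes "1 \<le> R" "R \<le> C" "R\<^sup>2 < 3 * (C + 1)"
  shows "R\<^sup>2 \<le> 9 / 2 * C"
proof (cases "C \<ge> 2")
  case False
  then have "R * R \<le> 2 * R"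
    using assms by (intro mult_right_mono) auto
  then show ?thesis
    using assms unfolding power2_eq_square by linarith
qed (use assms in simp)

lemma exp_le_exp_add_of_gap:
  fixes R C E :: real
  assumes R: "1 \<le> R" "R \<le> C"
    and gap: "E - R\<^sup>2 / (3 * C) \<le> 1 / (3 * (C + 1)) - R\<^sup>2 / (9 * (C + 1)\<^sup>2)"
  shows "exp E \<le> exp (R\<^sup>2 / (3 * C)) + 5 / (2 * (C + 1))"
proof (cases "E \<le> R\<^sup>2 / (3 * C)")
  case True
  then have "exp E \<le> exp (R\<^sup>2 / (3 * C))"
    by simp
  moreover have "0 \<le> 5 / (2 * (C + 1))"
    using R by simp
  ultimately show ?thesis
    by linarith
next
  case False
  define c Y where "c = C + 1" and "Y = R\<^sup>2 / (3 * C)"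
  have c: "c \<ge> 2" "R + 1 \<le> c"
    using R by (simp_all add: c_def)
  have "E - Y \<le> 1 / (3 * c) - R\<^sup>2 / (9 * c\<^sup>2)" "\<not> E \<le> Y"
    using gap False unfolding c_def Y_def by auto
  moreover have "0 \<le> R\<^sup>2 / (9 * c\<^sup>2)" by simp
  ultimately have "R\<^sup>2 / (9 * c\<^sup>2) < 1 / (3 * c)" "E - Y \<le> 1 / (3 * c)"
    by linarith+
  then have "R\<^sup>2 < 1 / (3 * c) * (9 * c\<^sup>2)"
    using c by (simp add: pos_divide_less_eq)
  also have "\<dots> = 3 * c"
    using c by (simp add: power2_eq_square)
  finally have "R\<^sup>2 < 3 * c" .
  then have "R\<^sup>2 \<le> 9 / 2 * C"
    using power2_le_of_power2_less[OF R] by (simp add: c_def)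
  then have "Y \<le> 3 / 2"
    using R by (simp add: Y_def pos_divide_le_eq)
  moreover have "1 / (3 * c) \<le> 1 / 6"
    using c by simp
  ultimately have "E \<le> 5 / 3"
    using \<open>E - Y \<le> 1 / (3 * c)\<close> by linarith
  then have "exp E \<le> 15 / 2"
    using exp_5_3_le by (meson exp_le_cancel_iff order_trans)
  then have "exp E * (E - Y) \<le> 15 / 2 * (1 / (3 * c))"
    using False \<open>E - Y \<le> 1 / (3 * c)\<close> by (intro mult_mono) (auto simp: Y_def)
  moreover have "15 / 2 * (1 / (3 * c)) = 5 / (2 * c)"
    by simp
  ultimately have "exp E - exp Y \<le> 5 / (2 * c)"
    using exp_diff_le[of E Y] by linarith
  then show ?thesis
    by (simp only: c_def Y_def)
qed

text \<open>Hoeffding's lemma, as \<open>(1 + exp h) / 2 \<le> exp (h / 2 + h\<^sup>2 / 8)\<close>, bounds the mean by \<open>exp E\<close>, and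
  \<open>E\<close> exceeds the exponent \<open>R\<^sup>2 / 3C\<close> of \<open>\<Phi>(R, C)\<close> by less than \<open>1 / 3(C + 1)\<close>.\<close>
lemma Phi_mean_le_large:
  fixes R C :: real
  assumes R: "1 \<le> R" "R \<le> C"
  shows "(Phi (R + 1) (C + 1) + Phi (R - 1) (C + 1)) / 2 \<le> Phi R C + 5 / (2 * (C + 1))"
proof -
  define c h a where "c = C + 1" and "h = 4 * R / (3 * c)" and "a = (R - 1)\<^sup>2 / (3 * c)"
  define E where "E = (R\<^sup>2 + 1) / (3 * c) + 2 * R\<^sup>2 / (9 * c\<^sup>2)"
  have c: "c \<ge> 2" "h \<ge> 0"
    using R by (simp_all add: c_def h_def)
  have "(R + 1)\<^sup>2 / (3 * c) = a + h"
    using c by (simp add: a_def h_def field_simps power2_eq_square)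
  moreover have "a + (h / 2 + h\<^sup>2 / 8) = E"
    using c by (simp add: a_def E_def h_def field_simps power2_eq_square)
  ultimately have "(Phi (R + 1) (C + 1) + Phi (R - 1) (C + 1)) / 2 = exp a * ((1 + exp h) / 2)"
    and "exp a * exp (h / 2 + h\<^sup>2 / 8) = exp E"
    using R by (simp_all add: Phi_eq_exp a_def c_def exp_add[symmetric] algebra_simps)
  moreover have "exp a * ((1 + exp h) / 2) \<le> exp a * exp (h / 2 + h\<^sup>2 / 8)"
    using one_plus_exp_half_le[OF c(2)] by simp
  moreover have "R\<^sup>2 * (1 / c + 1 / c\<^sup>2) \<le> R\<^sup>2 * (1 / C)"
    using inverse_add_inverse_power2_le[of C] R by (intro mult_left_mono) (auto simp: c_def)
  moreover have "E = R\<^sup>2 * (1 / c + 1 / c\<^sup>2) / 3 + 1 / (3 * c) - R\<^sup>2 / (9 * c\<^sup>2)"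
    using c by (simp add: E_def field_simps power2_eq_square)
  then have "exp E \<le> exp (R\<^sup>2 / (3 * C)) + 5 / (2 * (C + 1))"
    using exp_le_exp_add_of_gap[OF R, of E] \<open>R\<^sup>2 * (1 / c + 1 / c\<^sup>2) \<le> R\<^sup>2 * (1 / C)\<close>
    by (simp add: c_def)
  ultimately show ?thesis
    using R by (simp add: Phi_eq_exp)
qed

lemma Phi_mean_le:
  fixes R C :: real
  assumes "C \<ge> 0" "\<bar>R\<bar> \<le> C"
  shows "(Phi (R + 1) (C + 1) + Phi (R - 1) (C + 1)) / 2 \<le> Phi R C + 5 / (2 * (C + 1))"
  using assms Phi_mean_le_nonpos[of C R] Phi_mean_le_small[of R C] Phi_mean_le_large[of R C]
  by (cases "R \<le> 0"; cases "R < 1") auto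

text \<open>Writing \<open>r = |r| s\<close> with \<open>s = \<plusminus>1\<close>, the step interpolates between \<open>(R, C)\<close> and
  \<open>(R + s, C + 1)\<close>, where \<open>\<Phi>\<close> is the mean bounded by \<open>Phi_mean_le\<close> plus \<open>s\<close> times the weight.\<close>
lemma Phi_step_le:
  fixes R C r :: real
  assumes C: "C \<ge> 0" "\<bar>R\<bar> \<le> C" and r: "\<bar>r\<bar> \<le> 1"
  shows "Phi (R + r) (C + \<bar>r\<bar>) \<le> Phi R C + wANH R C * r + 5 / 2 * \<bar>r\<bar> / (C + 1)"
proof -
  define s where "s = (if r \<ge> 0 then 1 else -1 :: real)"
  define M where "M = (Phi (R + 1) (C + 1) + Phi (R - 1) (C + 1)) / 2"
  have r_eq: "\<bar>r\<bar> * s = r"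
    by (simp add: s_def)
  have "Phi (R + s) (C + 1) = M + s * wANH R C"
    by (simp add: s_def M_def wANH_def field_simps)
  then have "Phi (R + r) (C + \<bar>r\<bar>) \<le> (1 - \<bar>r\<bar>) * Phi R C + \<bar>r\<bar> * (M + s * wANH R C)"
    using Phi_convex_step[OF C, of "\<bar>r\<bar>" s] r unfolding r_eq by simp
  also have "\<dots> = (1 - \<bar>r\<bar>) * Phi R C + \<bar>r\<bar> * M + r * wANH R C"
    by (metis r_eq distrib_left mult.assoc add.assoc)
  also have "\<bar>r\<bar> * M \<le> \<bar>r\<bar> * (Phi R C + 5 / (2 * (C + 1)))"
    using Phi_mean_le[OF C] by (intro mult_left_mono) (auto simp: M_def)
  finally show ?thesis
    by (simp add: algebra_simps)
qed

lemma wANH_nonneg: "C \<ge> 0 \<Longrightarrow> wANH R C \<ge> 0"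
proof -
  assume "C \<ge> 0"
  have "(max 0 (R - 1))\<^sup>2 \<le> (max 0 (R + 1))\<^sup>2"
    by (intro power_mono) auto
  with \<open>C \<ge> 0\<close> show ?thesis
    by (simp add: wANH_def Phi_eq_exp divide_right_mono)
qed

lemma wANH_0_0_pos: "wANH 0 0 > 0"
  by (simp add: wANH_def Phi_eq_exp)

lemma sum_divide_one_plus_partial_sum_le:
  fixes x :: "nat \<Rightarrow> real"
  assumes x: "\<And>t. 0 \<le> x t" "\<And>t. x t \<le> 1"
  shows "(\<Sum>t = 1..n. x t / (1 + (\<Sum>s = 1..t - 1. x s)))
           \<le> ln (1 + (\<Sum>t = 1..n. x t)) + 2 - 2 / (1 + (\<Sum>t = 1..n. x t))"
proof (induction n)
  case 0
  then show ?case by simp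
next
  case (Suc n)
  define a y where "a = 1 + (\<Sum>t = 1..n. x t)" and "y = x (Suc n)"
  have a: "a \<ge> 1" and y: "0 \<le> y" "y \<le> 1"
    using x by (auto simp: a_def y_def sum_nonneg)
  have "y / a - (y / a)\<^sup>2 \<le> ln (1 + y / a)"
    using y a by (intro ln_one_plus_pos_lower_bound) auto
  also have "1 + y / a = (a + y) / a"
    using a by (simp add: field_simps)
  finally have "y / a - (y / a)\<^sup>2 \<le> ln ((a + y) / a)" .
  then have "y / a \<le> ln (a + y) - ln a + (y / a)\<^sup>2"
    using a y by (simp add: ln_div)
  moreover have "(y / a)\<^sup>2 \<le> 2 / a - 2 / (a + y)"
  proof -
    have "(y / a)\<^sup>2 \<le> y / (a * a)"
      using y a by (simp add: power2_eq_square divide_right_mono mult_left_le)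
    also have "\<dots> \<le> 2 * y / (a * (a + y))"
    proof -
      have "a * (a + y) \<le> 2 * (a * a)"
        using y a by (simp add: algebra_simps)
      then have "2 * y / (2 * (a * a)) \<le> 2 * y / (a * (a + y))"
        using y a by (intro divide_left_mono) auto
      then show ?thesis by simp
    qed
    also have "\<dots> = 2 / a - 2 / (a + y)"
      using y a by (simp add: field_simps)
    finally show ?thesis .
  qed
  moreover have "(\<Sum>t = 1..Suc n. x t / (1 + (\<Sum>s = 1..t - 1. x s)))
      = (\<Sum>t = 1..n. x t / (1 + (\<Sum>s = 1..t - 1. x s))) + y / a"
    by (simp add: a_def y_def)
  ultimately show ?case
    using Suc.IH by (simp add: a_def y_def add_ac)
qed

section \<open>Levels of the geometric covering\<close>

lemma mem_intv_iff: "1 \<le> t \<Longrightarrow> t \<in> intv k i \<longleftrightarrow> i = (t - 1) div 2 ^ k + 1"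
proof -
  assume "1 \<le> t"
  have "t \<in> intv k i \<longleftrightarrow> (i - 1) * 2 ^ k \<le> t - 1 \<and> t - 1 < i * 2 ^ k"
    using \<open>1 \<le> t\<close> by (auto simp: intv_def)
  also have "\<dots> \<longleftrightarrow> i = (t - 1) div 2 ^ k + 1"
  proof
    assume h: "(i - 1) * 2 ^ k \<le> t - 1 \<and> t - 1 < i * 2 ^ k"
    then have "i \<ge> 1"
      by (cases i) auto
    then have "(t - 1) div 2 ^ k = i - 1"
      using h by (intro div_nat_eqI) (auto simp: mult.commute)
    then show "i = (t - 1) div 2 ^ k + 1"
      using \<open>i \<ge> 1\<close> by simp
  next
    assume "i = (t - 1) div 2 ^ k + 1"
    then show "(i - 1) * 2 ^ k \<le> t - 1 \<and> t - 1 < i * 2 ^ k"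
      using dividend_less_div_times[of "2 ^ k" "t - 1"] by (simp add: mult.commute)
  qed
  finally show ?thesis .
qed

definition level_blocks :: "nat \<Rightarrow> nat \<Rightarrow> nat set" where
  "level_blocks k T = (\<lambda>t. (t - 1) div 2 ^ k + 1) ` {1..T}"

lemma level_blocks_subset: "level_blocks k T \<subseteq> {1..(T - 1) div 2 ^ k + 1}"
  by (auto simp: level_blocks_def intro!: div_le_mono)

lemma intv_Int_nonempty: "i \<in> level_blocks k T \<Longrightarrow> intv k i \<inter> {1..T} \<noteq> {}"
proof -
  assume "i \<in> level_blocks k T"
  then obtain t where "t \<in> {1..T}" "i = (t - 1) div 2 ^ k + 1"
    by (auto simp: level_blocks_def)
  then have "t \<in> intv k i \<inter> {1..T}"
    by (simp add: mem_intv_iff)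
  then show ?thesis by blast
qed

lemma sum_level_blocks:
  "(\<Sum>t = 1..T. h t) = (\<Sum>i \<in> level_blocks k T. \<Sum>t \<in> intv k i \<inter> {1..T}. h t)"
proof -
  have "(\<Sum>t = 1..T. h t) = (\<Sum>i \<in> level_blocks k T. \<Sum>t \<in> {t \<in> {1..T}. (t - 1) div 2 ^ k + 1 = i}. h t)"
    unfolding level_blocks_def by (rule sum.image_gen) simp
  also have "\<dots> = (\<Sum>i \<in> level_blocks k T. \<Sum>t \<in> intv k i \<inter> {1..T}. h t)"
    by (intro sum.cong refl arg_cong[where f = "\<lambda>A. sum h A"]) (auto simp: mem_intv_iff)
  finally show ?thesis .
qed

lemma sum_sqrt_le_sqrt_card_sum:
  fixes a :: "'a \<Rightarrow> real"
  assumes "\<And>i. i \<in> I \<Longrightarrow> 0 \<le> a i"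
  shows "(\<Sum>i\<in>I. sqrt (a i)) \<le> sqrt (card I * (\<Sum>i\<in>I. a i))"
proof (rule real_le_rsqrt)
  have "(\<Sum>i\<in>I. sqrt (a i))\<^sup>2 \<le> (\<Sum>i\<in>I. (sqrt (a i))\<^sup>2) * card I"
    by (rule sum_squared_le_sum_of_squares)
  also have "(\<Sum>i\<in>I. (sqrt (a i))\<^sup>2) = (\<Sum>i\<in>I. a i)"
    using assms by (intro sum.cong) auto
  finally show "(\<Sum>i\<in>I. sqrt (a i))\<^sup>2 \<le> card I * (\<Sum>i\<in>I. a i)"
    by (simp add: mult.commute)
qed

section \<open>Projected online gradient descent\<close>

lemma power2_norm_diff_le:
  assumes diam: "\<forall>w\<in>\<Omega>. \<forall>w'\<in>\<Omega>. norm (w - w') \<le> D" and "y \<in> \<Omega>" "b \<in> \<Omega>" "c \<in> \<Omega>"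
  shows "(norm (y - c))\<^sup>2 - (norm (y - b))\<^sup>2 \<le> 2 * D * norm (c - b)"
proof -
  have "norm (y - c) - norm (y - b) \<le> norm (c - b)"
    using norm_triangle_ineq3[of "y - c" "y - b"] by (simp add: norm_minus_commute)
  then have "(norm (y - c) - norm (y - b)) * (norm (y - c) + norm (y - b))
      \<le> norm (c - b) * (norm (y - c) + norm (y - b))"
    by (intro mult_right_mono) auto
  also have "\<dots> \<le> norm (c - b) * (2 * D)"
  proof -
    have "norm (y - c) \<le> D" "norm (y - b) \<le> D"
      using diam assms by auto
    then show ?thesis
      by (intro mult_left_mono) auto
  qed
  finally show ?thesis
    by (simp add: power2_eq_square algebra_simps)
qed

lemma projected_step_inner_le:
  fixes a v b c :: "'a::euclidean_space"
  assumes "convex \<Omega>" "closed \<Omega>" "\<eta> > 0" and diam: "\<forall>w\<in>\<Omega>. \<forall>w'\<in>\<Omega>. norm (w - w') \<le> D"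
    and "b \<in> \<Omega>" "c \<in> \<Omega>"
  shows "v \<bullet> (a - b) \<le> ((norm (a - b))\<^sup>2 - (norm (closest_point \<Omega> (a - \<eta> *\<^sub>R v) - c))\<^sup>2) / (2 * \<eta>)
                        + D / \<eta> * norm (c - b) + \<eta> / 2 * (norm v)\<^sup>2"
proof -
  define y where "y = closest_point \<Omega> (a - \<eta> *\<^sub>R v)"
  have "\<Omega> \<noteq> {}"
    using \<open>b \<in> \<Omega>\<close> by auto
  then have "y \<in> \<Omega>"
    using \<open>closed \<Omega>\<close> by (simp add: y_def closest_point_in_set)
  have "norm (y - b) \<le> norm (a - \<eta> *\<^sub>R v - b)"
    using closest_point_lipschitz[OF assms(1,2) \<open>\<Omega> \<noteq> {}\<close>, of "a - \<eta> *\<^sub>R v" b]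
    by (simp add: y_def closest_point_self[OF \<open>b \<in> \<Omega>\<close>] dist_norm)
  then have "(norm (y - b))\<^sup>2 \<le> (norm ((a - b) - \<eta> *\<^sub>R v))\<^sup>2"
    by (simp add: power_mono algebra_simps)
  also have "\<dots> = (norm (a - b))\<^sup>2 - 2 * \<eta> * (v \<bullet> (a - b)) + \<eta>\<^sup>2 * (norm v)\<^sup>2"
    unfolding power2_norm_eq_inner
    by (simp add: inner_diff_left inner_diff_right inner_commute algebra_simps power2_eq_square)
  finally have "v \<bullet> (a - b) * (2 * \<eta>)
      \<le> (norm (a - b))\<^sup>2 - (norm (y - c))\<^sup>2 + 2 * D * norm (c - b) + \<eta>\<^sup>2 * (norm v)\<^sup>2"
    using power2_norm_diff_le[OF diam \<open>y \<in> \<Omega>\<close> assms(5,6)] by (simp add: algebra_simps)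
  then have "v \<bullet> (a - b)
      \<le> ((norm (a - b))\<^sup>2 - (norm (y - c))\<^sup>2 + 2 * D * norm (c - b) + \<eta>\<^sup>2 * (norm v)\<^sup>2) / (2 * \<eta>)"
    using \<open>\<eta> > 0\<close> by (simp add: pos_le_divide_eq)
  also have "\<dots> = ((norm (a - b))\<^sup>2 - (norm (y - c))\<^sup>2) / (2 * \<eta>) + D / \<eta> * norm (c - b) + \<eta> / 2 * (norm v)\<^sup>2"
    using \<open>\<eta> > 0\<close> by (simp add: field_simps power2_eq_square)
  finally show ?thesis
    by (simp add: y_def)
qed

lemma ogd_dynamic_regret_inner:
  fixes x u :: "nat \<Rightarrow> 'a::euclidean_space" and g :: "nat \<Rightarrow> 'a \<Rightarrow> 'a"
  assumes "convex \<Omega>" "closed \<Omega>" "\<eta> > 0" and diam: "\<forall>w\<in>\<Omega>. \<forall>w'\<in>\<Omega>. norm (w - w') \<le> D"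
    and "\<And>t. t \<in> {s..<s + n} \<Longrightarrow> x (Suc t) = closest_point \<Omega> (x t - \<eta> *\<^sub>R g t (x t))"
    and "\<And>t. t \<in> {s..s + n} \<Longrightarrow> u t \<in> \<Omega>"
  shows "(\<Sum>t = s..<s + n. g t (x t) \<bullet> (x t - u t))
     \<le> ((norm (x s - u s))\<^sup>2 - (norm (x (s + n) - u (s + n)))\<^sup>2) / (2 * \<eta>)
        + D / \<eta> * (\<Sum>t = s..<s + n. norm (u (Suc t) - u t))
        + \<eta> / 2 * (\<Sum>t = s..<s + n. (norm (g t (x t)))\<^sup>2)"
  using assms(5,6)
proof (induction n)
  case 0
  then show ?case by simp
next
  case (Suc n)
  let ?t = "s + n"
  have "g ?t (x ?t) \<bullet> (x ?t - u ?t)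
      \<le> ((norm (x ?t - u ?t))\<^sup>2 - (norm (x (Suc ?t) - u (Suc ?t)))\<^sup>2) / (2 * \<eta>)
         + D / \<eta> * norm (u (Suc ?t) - u ?t) + \<eta> / 2 * (norm (g ?t (x ?t)))\<^sup>2"
    using projected_step_inner_le[where a = "x (s + n)" and v = "g (s + n) (x (s + n))"
        and b = "u (s + n)" and c = "u (Suc (s + n))", OF assms(1-4)] Suc.prems
    by simp
  moreover have "(\<Sum>t = s..<s + n. g t (x t) \<bullet> (x t - u t))
     \<le> ((norm (x s - u s))\<^sup>2 - (norm (x ?t - u ?t))\<^sup>2) / (2 * \<eta>)
        + D / \<eta> * (\<Sum>t = s..<s + n. norm (u (Suc t) - u t))
        + \<eta> / 2 * (\<Sum>t = s..<s + n. (norm (g t (x t)))\<^sup>2)"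
    using Suc by simp
  moreover have "(\<Sum>t = s..<s + Suc n. h t) = (\<Sum>t = s..<s + n. h t) + h (s + n)" for h :: "nat \<Rightarrow> real"
    by simp
  ultimately show ?case
    unfolding add_Suc_right by (simp only: diff_divide_distrib distrib_left; linarith)
qed

lemma ogd_dynamic_regret:
  fixes x u :: "nat \<Rightarrow> 'a::euclidean_space" and g :: "nat \<Rightarrow> 'a \<Rightarrow> 'a"
  assumes "convex \<Omega>" "closed \<Omega>" "\<eta> > 0" and diam: "\<forall>w\<in>\<Omega>. \<forall>w'\<in>\<Omega>. norm (w - w') \<le> D"
    and step: "\<And>t. t \<in> {s..<s + n} \<Longrightarrow> x (Suc t) = closest_point \<Omega> (x t - \<eta> *\<^sub>R g t (x t))"
    and u: "\<And>t. t \<in> {s..s + n} \<Longrightarrow> u t \<in> \<Omega>" and "x s \<in> \<Omega>"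
    and subgrad: "\<And>t w v. t \<in> {s..<s + n} \<Longrightarrow> w \<in> \<Omega> \<Longrightarrow> v \<in> \<Omega> \<Longrightarrow> f t v \<ge> f t w + g t w \<bullet> (v - w)"
    and gbound: "\<And>t w. t \<in> {s..<s + n} \<Longrightarrow> w \<in> \<Omega> \<Longrightarrow> norm (g t w) \<le> G"
  shows "(\<Sum>t = s..<s + n. f t (x t) - f t (u t))
     \<le> D\<^sup>2 / (2 * \<eta>) + D / \<eta> * (\<Sum>t = s..<s + n. norm (u (Suc t) - u t)) + \<eta> / 2 * (n * G\<^sup>2)"
proof -
  have "\<Omega> \<noteq> {}"
    using u[of s] by auto
  have x: "x t \<in> \<Omega>" if "t \<in> {s..<s + n}" for t
  proof (cases "t = s")
    case False
    with that have "x t = closest_point \<Omega> (x (t - 1) - \<eta> *\<^sub>R g (t - 1) (x (t - 1)))"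
      using step[of "t - 1"] by (cases t) auto
    then show ?thesis
      using \<open>closed \<Omega>\<close> \<open>\<Omega> \<noteq> {}\<close> by (simp add: closest_point_in_set)
  qed (use \<open>x s \<in> \<Omega>\<close> in simp)
  have "(\<Sum>t = s..<s + n. f t (x t) - f t (u t)) \<le> (\<Sum>t = s..<s + n. g t (x t) \<bullet> (x t - u t))"
  proof (rule sum_mono)
    fix t assume t: "t \<in> {s..<s + n}"
    then have "f t (u t) \<ge> f t (x t) + g t (x t) \<bullet> (u t - x t)"
      using subgrad x u by simp
    then show "f t (x t) - f t (u t) \<le> g t (x t) \<bullet> (x t - u t)"
      by (simp add: inner_diff_right)
  qed
  also have "\<dots> \<le> ((norm (x s - u s))\<^sup>2 - (norm (x (s + n) - u (s + n)))\<^sup>2) / (2 * \<eta>)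
        + D / \<eta> * (\<Sum>t = s..<s + n. norm (u (Suc t) - u t))
        + \<eta> / 2 * (\<Sum>t = s..<s + n. (norm (g t (x t)))\<^sup>2)"
    using assms by (intro ogd_dynamic_regret_inner) auto
  also have "(norm (x s - u s))\<^sup>2 - (norm (x (s + n) - u (s + n)))\<^sup>2 \<le> D\<^sup>2"
  proof -
    have "(norm (x s - u s))\<^sup>2 \<le> D\<^sup>2"
      using diam u[of s] \<open>x s \<in> \<Omega>\<close> by (intro power_mono) auto
    then show ?thesis
      using zero_le_power2[of "norm (x (s + n) - u (s + n))"] by linarith
  qed
  also have "(\<Sum>t = s..<s + n. (norm (g t (x t)))\<^sup>2) \<le> (\<Sum>t = s..<s + n. G\<^sup>2)"
    using gbound x by (intro sum_mono power_mono) auto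
  finally show ?thesis
    using \<open>\<eta> > 0\<close> by (simp add: divide_right_mono mult_left_mono)
qed

section \<open>The meta-algorithm\<close>

lemma cT_nonneg: "1 \<le> T \<Longrightarrow> 0 \<le> cT T"
  by (simp add: cT_def)

locale aod_setting =
  fixes \<Omega> :: "'a::euclidean_space set"
    and f :: "nat \<Rightarrow> 'a \<Rightarrow> real"
    and g :: "nat \<Rightarrow> 'a \<Rightarrow> 'a"
    and D G :: real and T :: nat
    and init :: "nat \<Rightarrow> 'a"
  assumes T: "T \<ge> 1"
    and cvx: "convex \<Omega>" and cl: "closed \<Omega>" and nonempty: "\<Omega> \<noteq> {}"
    and fconv: "\<forall>t\<in>{1..T}. convex_on \<Omega> (f t)"
    and frange: "\<forall>t\<in>{1..T}. \<forall>w\<in>\<Omega>. 0 \<le> f t w \<and> f t w \<le> 1"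
    and init: "\<forall>k. init k \<in> \<Omega>"
begin

abbreviation "E \<equiv> expert \<Omega> g D G init"
abbreviation "W \<equiv> aod \<Omega> f g D G init T"

lemma expert_in: "E k i t \<in> \<Omega>"
  by (induction t arbitrary: i) (auto simp: ogd_step_def closest_point_in_set cl nonempty init)

lemma plays_eq_aod: "1 \<le> v \<Longrightarrow> v \<le> n \<Longrightarrow> plays f E T n v = W v"
  by (induction n) (auto simp: aod_def le_Suc_eq)

lemma aod_eq_meta_point: "1 \<le> t \<Longrightarrow> W t = meta_point f E T (plays f E T (t - 1)) t"
  by (cases t) (auto simp: aod_def)

text \<open>Contains every interval active in some round \<open>t \<le> T\<close>; the surplus only weakens the bound on
  the potential.\<close>
definition experts :: "(nat \<times> nat) set" where
  "experts = {k. 2 ^ k \<le> T} \<times> {1..T}"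

lemma finite_experts: "finite experts"
proof -
  have "k < T" if "2 ^ k \<le> T" for k :: nat
    using that less_exp[of k] by linarith
  then have "{k. 2 ^ k \<le> T} \<subseteq> {..<T}"
    by auto
  then show ?thesis
    unfolding experts_def by (auto intro: finite_subset)
qed

lemma active_subset_experts: "t \<le> T \<Longrightarrow> active T t \<subseteq> experts"
proof
  fix I assume "t \<le> T" "I \<in> active T t"
  moreover obtain k i where I: "I = (k, i)"
    by force
  ultimately have "2 ^ k \<le> T" "1 \<le> i" "(i - 1) * 2 ^ k + 1 \<le> t"
    by (auto simp: active_def intv_def)
  moreover have "i - 1 \<le> (i - 1) * 2 ^ k"
    by simp
  ultimately have "i \<le> T"
    using \<open>t \<le> T\<close> by linarith
  then show "I \<in> experts"
    using \<open>2 ^ k \<le> T\<close> \<open>1 \<le> i\<close> by (simp add: experts_def I)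
qed

text \<open>\<open>gap I t\<close> is the paper's \<open>f\<^sub>t(w\<^sub>t) - f\<^sub>t(w\<^sub>t\<^sub>,\<^sub>I)\<close> for \<open>t \<in> I\<close>, extended by \<open>0\<close>
  outside \<open>I\<close>, so that \<open>R\<^sub>t\<^sub>-\<^sub>1\<^sub>,\<^sub>I\<close> and \<open>C\<^sub>t\<^sub>-\<^sub>1\<^sub>,\<^sub>I\<close> become prefix sums over all rounds.\<close>
definition gap :: "nat \<times> nat \<Rightarrow> nat \<Rightarrow> real" where
  "gap I t = (if t \<in> intv (fst I) (snd I) then f t (W t) - f t (E (fst I) (snd I) t) else 0)"

definition Rgap :: "nat \<times> nat \<Rightarrow> nat \<Rightarrow> real" where
  "Rgap I n = (\<Sum>t = 1..n. gap I t)"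

definition Cgap :: "nat \<times> nat \<Rightarrow> nat \<Rightarrow> real" where
  "Cgap I n = (\<Sum>t = 1..n. \<bar>gap I t\<bar>)"

definition weight :: "nat \<Rightarrow> nat \<times> nat \<Rightarrow> real" where
  "weight t I = wANH (Rgap I (t - 1)) (Cgap I (t - 1))"

lemma Cgap_nonneg: "0 \<le> Cgap I n"
  by (simp add: Cgap_def sum_nonneg)

lemma abs_Rgap_le_Cgap: "\<bar>Rgap I n\<bar> \<le> Cgap I n"
  unfolding Rgap_def Cgap_def by (rule sum_abs)

lemma weight_nonneg: "0 \<le> weight t I"
  by (simp add: weight_def wANH_nonneg Cgap_nonneg)

lemma meta_point_weight:
  assumes "t \<in> {1..T}" "I \<in> active T t"
  shows "wANH (Rsum f (plays f E T (t - 1)) E (fst I) (snd I) t)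
              (Csum f (plays f E T (t - 1)) E (fst I) (snd I) t) = weight t I"
proof -
  obtain k i where I: "I = (k, i)"
    by force
  have window: "{1..t - 1} \<inter> intv k i = {(i - 1) * 2 ^ k + 1..<t}"
    using assms by (auto simp: I active_def intv_def)
  have past: "plays f E T (t - 1) v = W v" if "v \<in> {(i - 1) * 2 ^ k + 1..<t}" for v
    using that by (intro plays_eq_aod) auto
  have "Rgap I (t - 1) = (\<Sum>v \<in> {1..t - 1} \<inter> intv k i. f v (W v) - f v (E k i v))"
    unfolding Rgap_def gap_def I by (simp add: sum.inter_restrict[symmetric] if_distrib)
  also have "\<dots> = Rsum f (plays f E T (t - 1)) E k i t"
    unfolding window Rsum_def using past by (intro sum.cong) auto
  finally have R: "Rsum f (plays f E T (t - 1)) E k i t = Rgap I (t - 1)" ..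
  have "\<bar>gap I v\<bar> = (if v \<in> intv k i then \<bar>f v (W v) - f v (E k i v)\<bar> else 0)" for v
    by (simp add: gap_def I)
  then have "Cgap I (t - 1) = (\<Sum>v \<in> {1..t - 1} \<inter> intv k i. \<bar>f v (W v) - f v (E k i v)\<bar>)"
    unfolding Cgap_def by (simp add: sum.inter_restrict[symmetric])
  also have "\<dots> = Csum f (plays f E T (t - 1)) E k i t"
    unfolding window Csum_def using past by (intro sum.cong) auto
  finally have C: "Csum f (plays f E T (t - 1)) E k i t = Cgap I (t - 1)" ..
  show ?thesis
    by (simp only: weight_def I R C fst_conv snd_conv)
qed

lemma aod_eq_weighted_mean:
  assumes "t \<in> {1..T}"
  shows "(\<Sum>I\<in>active T t. weight t I) > 0"
    and "W t = (\<Sum>I\<in>active T t. (weight t I / (\<Sum>J\<in>active T t. weight t J)) *\<^sub>R E (fst I) (snd I) t)"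
proof -
  have "finite (active T t)"
    using assms by (intro finite_subset[OF active_subset_experts finite_experts]) auto
  moreover have "(0, t) \<in> active T t"
    using assms T by (auto simp: active_def intv_def)
  moreover have "weight t (0, t) > 0"
    using wANH_0_0_pos by (simp add: weight_def Rgap_def Cgap_def gap_def intv_def)
  ultimately show "(\<Sum>I\<in>active T t. weight t I) > 0"
    by (metis member_le_sum weight_nonneg order_less_le_trans)
  define w where "w I = wANH (Rsum f (plays f E T (t - 1)) E (fst I) (snd I) t)
                              (Csum f (plays f E T (t - 1)) E (fst I) (snd I) t)" for I
  have w: "w I = weight t I" if "I \<in> active T t" for I
    using meta_point_weight[OF assms that] by (simp add: w_def)
  have "W t = (\<Sum>I\<in>active T t. (w I / (\<Sum>J\<in>active T t. w J)) *\<^sub>R E (fst I) (snd I) t)"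
    using assms by (simp add: aod_eq_meta_point meta_point_def w_def Let_def case_prod_beta)
  also have "\<dots> = (\<Sum>I\<in>active T t. (weight t I / (\<Sum>J\<in>active T t. weight t J)) *\<^sub>R E (fst I) (snd I) t)"
    using w by (simp cong: sum.cong)
  finally show "W t = (\<Sum>I\<in>active T t. (weight t I / (\<Sum>J\<in>active T t. weight t J)) *\<^sub>R E (fst I) (snd I) t)" .
qed

lemma aod_in: "t \<in> {1..T} \<Longrightarrow> W t \<in> \<Omega>"
  using aod_eq_weighted_mean[of t] weight_nonneg expert_in
  by (auto intro!: convex_sum cvx simp: sum_divide_distrib[symmetric] less_imp_neq[symmetric]
        intro: finite_subset[OF active_subset_experts finite_experts])

lemma weighted_gap_nonpos: "t \<in> {1..T} \<Longrightarrow> (\<Sum>I\<in>experts. weight t I * gap I t) \<le> 0"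
proof -
  assume t: "t \<in> {1..T}"
  define A Z where "A = active T t" and "Z = (\<Sum>I\<in>A. weight t I)"
  have "A \<subseteq> experts"
    using t active_subset_experts by (simp add: A_def)
  then have "finite A"
    using finite_experts finite_subset by blast
  have "Z > 0" and W: "W t = (\<Sum>I\<in>A. (weight t I / Z) *\<^sub>R E (fst I) (snd I) t)"
    using aod_eq_weighted_mean[OF t] by (simp_all add: A_def Z_def)
  then have "A \<noteq> {}"
    by (auto simp: Z_def)
  have "f t (W t) \<le> (\<Sum>I\<in>A. (weight t I / Z) * f t (E (fst I) (snd I) t))"
    unfolding W using \<open>finite A\<close> \<open>A \<noteq> {}\<close> fconv t \<open>Z > 0\<close> weight_nonneg expert_in
    by (intro convex_on_sum) (auto simp: Z_def sum_divide_distrib[symmetric])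
  then have "Z * f t (W t) \<le> (\<Sum>I\<in>A. weight t I * f t (E (fst I) (snd I) t))"
    using \<open>Z > 0\<close> by (simp add: sum_divide_distrib[symmetric] pos_le_divide_eq mult.commute)
  moreover have "(\<Sum>I\<in>experts. weight t I * gap I t) = (\<Sum>I\<in>A. weight t I * (f t (W t) - f t (E (fst I) (snd I) t)))"
    using \<open>A \<subseteq> experts\<close> finite_experts
    by (intro sum.mono_neutral_cong_right) (auto simp: A_def active_def experts_def gap_def)
  ultimately show ?thesis
    by (simp add: Z_def algebra_simps sum_subtractf sum_distrib_right)
qed

lemma abs_gap_le_1: "t \<in> {1..T} \<Longrightarrow> \<bar>gap I t\<bar> \<le> 1"
proof -
  assume t: "t \<in> {1..T}"
  then have "0 \<le> f t (W t)" "f t (W t) \<le> 1" "0 \<le> f t (E (fst I) (snd I) t)" "f t (E (fst I) (snd I) t) \<le> 1"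
    using frange aod_in[OF t] expert_in by auto
  then show ?thesis
    by (auto simp: gap_def)
qed

lemma potential_le:
  "n \<le> T \<Longrightarrow> (\<Sum>I\<in>experts. Phi (Rgap I n) (Cgap I n))
      \<le> (\<Sum>I\<in>experts. 1 + 5 / 2 * (\<Sum>t = 1..n. \<bar>gap I t\<bar> / (Cgap I (t - 1) + 1)))"
proof (induction n)
  case 0
  then show ?case by (simp add: Rgap_def Cgap_def Phi_eq_exp)
next
  case (Suc n)
  have t: "Suc n \<in> {1..T}"
    using Suc.prems by simp
  have "Phi (Rgap I (Suc n)) (Cgap I (Suc n)) \<le> Phi (Rgap I n) (Cgap I n)
      + weight (Suc n) I * gap I (Suc n) + 5 / 2 * \<bar>gap I (Suc n)\<bar> / (Cgap I n + 1)" for I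
    unfolding weight_def Rgap_def Cgap_def
    using Phi_step_le[OF Cgap_nonneg abs_Rgap_le_Cgap abs_gap_le_1[OF t], of I n I]
    by (simp add: Rgap_def Cgap_def)
  then have "(\<Sum>I\<in>experts. Phi (Rgap I (Suc n)) (Cgap I (Suc n)))
      \<le> (\<Sum>I\<in>experts. Phi (Rgap I n) (Cgap I n)) + (\<Sum>I\<in>experts. weight (Suc n) I * gap I (Suc n))
         + (\<Sum>I\<in>experts. 5 / 2 * \<bar>gap I (Suc n)\<bar> / (Cgap I n + 1))"
    by (simp add: sum.distrib[symmetric] sum_mono)
  also have "\<dots> \<le> (\<Sum>I\<in>experts. 1 + 5 / 2 * (\<Sum>t = 1..n. \<bar>gap I t\<bar> / (Cgap I (t - 1) + 1)))
         + (\<Sum>I\<in>experts. 5 / 2 * \<bar>gap I (Suc n)\<bar> / (Cgap I n + 1))"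
    using Suc weighted_gap_nonpos[OF t] by simp
  also have "\<dots> = (\<Sum>I\<in>experts. 1 + 5 / 2 * (\<Sum>t = 1..Suc n. \<bar>gap I t\<bar> / (Cgap I (t - 1) + 1)))"
    by (simp add: sum.distrib[symmetric] algebra_simps)
  finally show ?case .
qed

lemma Cgap_le_card: "Cgap I T \<le> card (intv (fst I) (snd I) \<inter> {1..T})"
proof -
  have "\<bar>gap I t\<bar> = (if t \<in> intv (fst I) (snd I) then \<bar>gap I t\<bar> else 0)" for t
    by (simp add: gap_def)
  then have "Cgap I T = (\<Sum>t \<in> {1..T} \<inter> intv (fst I) (snd I). \<bar>gap I t\<bar>)"
    unfolding Cgap_def by (subst sum.inter_restrict) auto
  also have "\<dots> = (\<Sum>t \<in> intv (fst I) (snd I) \<inter> {1..T}. \<bar>gap I t\<bar>)"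
    by (simp add: Int_commute)
  also have "\<dots> \<le> (\<Sum>t \<in> intv (fst I) (snd I) \<inter> {1..T}. 1)"
    using abs_gap_le_1 by (intro sum_mono) auto
  finally show ?thesis by simp
qed

lemma gap_harmonic_le:
  "(\<Sum>t = 1..T. \<bar>gap I t\<bar> / (Cgap I (t - 1) + 1)) \<le> 2 + ln (1 + real T)"
proof -
  define x where "x t = (if t \<in> {1..T} then \<bar>gap I t\<bar> else 0)" for t
  have "\<And>t. 0 \<le> x t" "\<And>t. x t \<le> 1"
    using abs_gap_le_1 by (auto simp: x_def)
  moreover have "(\<Sum>t = 1..T. x t) = Cgap I T"
    unfolding Cgap_def x_def by (intro sum.cong) auto
  ultimately have "(\<Sum>t = 1..T. x t / (1 + (\<Sum>s = 1..t - 1. x s)))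
           \<le> ln (1 + Cgap I T) + 2 - 2 / (1 + Cgap I T)"
    using sum_divide_one_plus_partial_sum_le[of x T] by simp
  moreover have "(\<Sum>t = 1..T. x t / (1 + (\<Sum>s = 1..t - 1. x s)))
      = (\<Sum>t = 1..T. \<bar>gap I t\<bar> / (Cgap I (t - 1) + 1))"
  proof (rule sum.cong)
    fix t assume "t \<in> {1..T}"
    moreover have "(\<Sum>s = 1..t - 1. x s) = Cgap I (t - 1)"
      using \<open>t \<in> {1..T}\<close> unfolding Cgap_def x_def by (intro sum.cong) auto
    ultimately show "x t / (1 + (\<Sum>s = 1..t - 1. x s)) = \<bar>gap I t\<bar> / (Cgap I (t - 1) + 1)"
      by (simp add: x_def add.commute)
  qed simp
  moreover have "ln (1 + Cgap I T) \<le> ln (1 + real T)"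
    using Cgap_le_card[of I] card_mono[of "{1..T}" "intv (fst I) (snd I) \<inter> {1..T}"] Cgap_nonneg[of I T]
    by simp
  moreover have "0 \<le> 2 / (1 + Cgap I T)"
    using Cgap_nonneg[of I T] by simp
  ultimately show ?thesis
    by linarith
qed

lemma card_experts_le: "real (card experts) \<le> (1 + log 2 T) * T"
proof -
  have "k \<le> nat \<lfloor>log 2 T\<rfloor>" if "2 ^ k \<le> T" for k
  proof -
    have "real k = log 2 (2 ^ k)"
      by (simp add: log_nat_power)
    also have "\<dots> \<le> log 2 T"
      using that T by (subst log_le_cancel_iff) auto
    finally show ?thesis
      by linarith
  qed
  then have "card {k. 2 ^ k \<le> T} \<le> card {..nat \<lfloor>log 2 T\<rfloor>}"
    by (intro card_mono) auto
  moreover have "real (nat \<lfloor>log 2 T\<rfloor>) \<le> log 2 T"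
    using T by simp
  ultimately have "real (card {k. 2 ^ k \<le> T}) \<le> 1 + log 2 T"
    by simp
  then show ?thesis
    by (simp add: experts_def card_cartesian_product mult_right_mono)
qed

lemma card_experts_le_exp_cT: "real (card experts) * (6 + 5 / 2 * ln (1 + real T)) \<le> exp (cT T)"
proof -
  define l where "l = ln (1 + real T)"
  have "0 \<le> l" "0 \<le> log 2 T"
    using T by (simp_all add: l_def)
  have "exp (cT T) = exp 1 * T * (1 + log 2 T) * ((5 + 3 * l) / 2)"
    using T \<open>0 \<le> l\<close> \<open>0 \<le> log 2 T\<close> by (simp add: cT_def exp_add l_def add_pos_nonneg)
  moreover have "6 + 5 / 2 * l \<le> exp 1 * ((5 + 3 * l) / 2)"
  proof -
    have "5 / 2 \<le> exp (1 :: real)"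
      using exp_lower_Taylor_quadratic[of 1] by simp
    then have "5 / 2 * ((5 + 3 * l) / 2) \<le> exp 1 * ((5 + 3 * l) / 2)"
      using \<open>0 \<le> l\<close> by (intro mult_right_mono) auto
    then show ?thesis
      using \<open>0 \<le> l\<close> by simp
  qed
  then have "real (card experts) * (6 + 5 / 2 * l) \<le> ((1 + log 2 T) * T) * (exp 1 * ((5 + 3 * l) / 2))"
    using card_experts_le \<open>0 \<le> l\<close> by (intro mult_mono) auto
  ultimately show ?thesis
    by (simp add: l_def mult_ac)
qed

text \<open>The whole potential is at most \<open>exp (cT T)\<close>, hence so is each of its summands.\<close>
lemma Rgap_le: "I \<in> experts \<Longrightarrow> Rgap I T \<le> sqrt (3 * cT T * card (intv (fst I) (snd I) \<inter> {1..T}))"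
proof (cases "Rgap I T \<le> 0")
  case True
  then show ?thesis
    by (meson order_trans real_sqrt_ge_zero cT_nonneg[OF T] mult_nonneg_nonneg of_nat_0_le_iff zero_le_numeral)
next
  case False
  assume I: "I \<in> experts"
  have "Cgap I T > 0"
    using False abs_Rgap_le_Cgap[of I T] by linarith
  have "Phi (Rgap I T) (Cgap I T) \<le> (\<Sum>J\<in>experts. Phi (Rgap J T) (Cgap J T))"
    using I finite_experts by (intro member_le_sum) (simp_all add: Phi_eq_exp)
  also have "\<dots> \<le> (\<Sum>J\<in>experts. 1 + 5 / 2 * (\<Sum>t = 1..T. \<bar>gap J t\<bar> / (Cgap J (t - 1) + 1)))"
    by (rule potential_le) simp
  also have "\<dots> \<le> (\<Sum>J\<in>experts. 6 + 5 / 2 * ln (1 + real T))"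
  proof (rule sum_mono)
    fix J
    show "1 + 5 / 2 * (\<Sum>t = 1..T. \<bar>gap J t\<bar> / (Cgap J (t - 1) + 1)) \<le> 6 + 5 / 2 * ln (1 + real T)"
      using gap_harmonic_le[of J] by linarith
  qed
  also have "\<dots> \<le> exp (cT T)"
    using card_experts_le_exp_cT by simp
  finally have "(Rgap I T)\<^sup>2 / (3 * Cgap I T) \<le> cT T"
    using False by (simp add: Phi_eq_exp)
  then have "(Rgap I T)\<^sup>2 \<le> 3 * Cgap I T * cT T"
    using \<open>Cgap I T > 0\<close> by (simp add: divide_le_eq ac_simps)
  also have "\<dots> \<le> 3 * cT T * card (intv (fst I) (snd I) \<inter> {1..T})"
    using Cgap_le_card[of I] cT_nonneg[OF T] by (simp add: mult_left_mono mult.commute)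
  finally show ?thesis
    by (rule real_le_rsqrt)
qed

lemma Rgap_eq_sum: "Rgap (k, i) T = (\<Sum>t \<in> intv k i \<inter> {1..T}. f t (W t) - f t (E k i t))"
  unfolding Rgap_def gap_def by (simp add: sum.inter_restrict[symmetric] Int_commute if_distrib)

end

section \<open>Dynamic regret of AOD on one level\<close>

locale aod_dynamic_setting = aod_setting +
  fixes u :: "nat \<Rightarrow> 'a"
  assumes DG: "D > 0" "G > 0"
    and diam: "\<forall>w\<in>\<Omega>. \<forall>w'\<in>\<Omega>. norm (w - w') \<le> D"
    and subgrad: "\<forall>t\<in>{1..T}. \<forall>w\<in>\<Omega>. \<forall>v\<in>\<Omega>. f t v \<ge> f t w + g t w \<bullet> (v - w)"
    and gbound: "\<forall>t\<in>{1..T}. \<forall>w\<in>\<Omega>. norm (g t w) \<le> G"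
    and u: "\<forall>t\<in>{1..T+1}. u t \<in> \<Omega>"
begin

lemma expert_dynamic_regret:
  assumes "intv k i \<inter> {1..T} \<noteq> {}"
  shows "(\<Sum>t \<in> intv k i \<inter> {1..T}. f t (E k i t) - f t (u t))
     \<le> D * G * sqrt (2 ^ k) / 2 + G * sqrt (2 ^ k) * (\<Sum>t \<in> intv k i \<inter> {1..T}. norm (u (t + 1) - u t))
        + D * G * card (intv k i \<inter> {1..T}) / (2 * sqrt (2 ^ k))"
proof -
  define s n where "s = (i - 1) * 2 ^ k + 1" and "n = min (i * 2 ^ k) T + 1 - s"
  have A: "intv k i \<inter> {1..T} = {s..<s + n}"
    using assms by (auto simp: intv_def s_def n_def)
  have range: "s + n \<le> T + 1" "1 \<le> s"
    using assms by (auto simp: intv_def s_def n_def)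
  have step: "E k i (Suc t) = closest_point \<Omega> (E k i t - eta D G k *\<^sub>R g t (E k i t))" if "t \<in> {s..<s + n}" for t
    using that by (auto simp: s_def ogd_step_def)
  have "(\<Sum>t = s..<s + n. f t (E k i t) - f t (u t))
     \<le> D\<^sup>2 / (2 * eta D G k) + D / eta D G k * (\<Sum>t = s..<s + n. norm (u (Suc t) - u t))
        + eta D G k / 2 * (n * G\<^sup>2)"
    using range subgrad gbound u step
    by (intro ogd_dynamic_regret[where x = "E k i" and g = g and \<eta> = "eta D G k", OF cvx cl _ diam])
      (auto simp: eta_def DG expert_in)
  moreover have "D\<^sup>2 / (2 * eta D G k) = D * G * sqrt (2 ^ k) / 2" "D / eta D G k = G * sqrt (2 ^ k)"
    "eta D G k / 2 * (n * G\<^sup>2) = D * G * n / (2 * sqrt (2 ^ k))"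
    using DG by (simp_all add: eta_def field_simps power2_eq_square)
  ultimately show ?thesis
    unfolding A by (simp add: ac_simps)
qed

lemma block_regret_le:
  assumes "2 ^ k \<le> T" "i \<in> level_blocks k T"
  shows "(\<Sum>t \<in> intv k i \<inter> {1..T}. f t (W t) - f t (u t))
     \<le> sqrt (3 * cT T * card (intv k i \<inter> {1..T})) + D * G * sqrt (2 ^ k) / 2
        + G * sqrt (2 ^ k) * (\<Sum>t \<in> intv k i \<inter> {1..T}. norm (u (t + 1) - u t))
        + D * G * card (intv k i \<inter> {1..T}) / (2 * sqrt (2 ^ k))"
proof -
  have "i \<le> (T - 1) div 2 ^ k + 1" "1 \<le> i"
    using assms(2) level_blocks_subset[of k T] by auto
  moreover have "(T - 1) div 2 ^ k \<le> T - 1"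
    by (rule div_le_dividend)
  ultimately have "i \<le> T"
    using T by linarith
  then have "(k, i) \<in> experts"
    using assms \<open>1 \<le> i\<close> by (simp add: experts_def)
  then have "Rgap (k, i) T \<le> sqrt (3 * cT T * card (intv k i \<inter> {1..T}))"
    using Rgap_le[of "(k, i)"] by simp
  moreover have "(\<Sum>t \<in> intv k i \<inter> {1..T}. f t (W t) - f t (u t))
      = Rgap (k, i) T + (\<Sum>t \<in> intv k i \<inter> {1..T}. f t (E k i t) - f t (u t))"
    by (simp add: Rgap_eq_sum sum.distrib[symmetric])
  ultimately show ?thesis
    using expert_dynamic_regret[OF intv_Int_nonempty[OF assms(2)]] by linarith
qed

lemma level_regret_le:
  assumes "2 ^ k \<le> T"
  defines "m \<equiv> real ((T - 1) div 2 ^ k + 1)"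
  shows "(\<Sum>t = 1..T. f t (W t)) - (\<Sum>t = 1..T. f t (u t))
     \<le> sqrt (3 * cT T * m * T) + m * D * G * sqrt (2 ^ k) / 2
        + G * sqrt (2 ^ k) * (\<Sum>t = 1..T. norm (u (t + 1) - u t)) + D * G * T / (2 * sqrt (2 ^ k))"
proof -
  define B L where "B = level_blocks k T" and "L i = real (card (intv k i \<inter> {1..T}))" for i
  have "card B \<le> m"
    using card_mono[OF _ level_blocks_subset[of k T]] by (simp add: B_def m_def)
  have sum_B: "(\<Sum>t = 1..T. h t) = (\<Sum>i\<in>B. \<Sum>t \<in> intv k i \<inter> {1..T}. h t)" for h :: "nat \<Rightarrow> real"
    unfolding B_def by (rule sum_level_blocks)
  have "(\<Sum>t = 1..T. f t (W t)) - (\<Sum>t = 1..T. f t (u t)) = (\<Sum>t = 1..T. f t (W t) - f t (u t))"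
    by (simp add: sum_subtractf)
  also have "\<dots> \<le> (\<Sum>i\<in>B. sqrt (3 * cT T * L i) + D * G * sqrt (2 ^ k) / 2
        + G * sqrt (2 ^ k) * (\<Sum>t \<in> intv k i \<inter> {1..T}. norm (u (t + 1) - u t))
        + D * G * L i / (2 * sqrt (2 ^ k)))"
    unfolding sum_B using assms block_regret_le by (intro sum_mono) (simp add: B_def L_def)
  also have "\<dots> = (\<Sum>i\<in>B. sqrt (3 * cT T * L i)) + card B * D * G * sqrt (2 ^ k) / 2
        + G * sqrt (2 ^ k) * (\<Sum>t = 1..T. norm (u (t + 1) - u t)) + D * G * T / (2 * sqrt (2 ^ k))"
    using sum_B[of "\<lambda>_. 1"] sum_B[of "\<lambda>t. norm (u (t + 1) - u t)"]
    by (simp add: L_def sum.distrib sum_distrib_left sum_divide_distrib[symmetric] flip: sum_distrib_right)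
  also have "(\<Sum>i\<in>B. sqrt (3 * cT T * L i)) \<le> sqrt (card B * (\<Sum>i\<in>B. 3 * cT T * L i))"
    using cT_nonneg[OF T] by (intro sum_sqrt_le_sqrt_card_sum) (simp add: L_def)
  also have "\<dots> \<le> sqrt (3 * cT T * m * T)"
  proof -
    have "(\<Sum>i\<in>B. 3 * cT T * L i) = 3 * cT T * T"
      using sum_B[of "\<lambda>_. 1"] by (simp add: L_def sum_distrib_left[symmetric])
    moreover have "card B * (3 * cT T * T) \<le> m * (3 * cT T * T)"
      using \<open>card B \<le> m\<close> cT_nonneg[OF T] by (intro mult_right_mono) auto
    ultimately show ?thesis
      by (simp add: mult_ac)
  qed
  also have "card B * D * G * sqrt (2 ^ k) / 2 \<le> m * D * G * sqrt (2 ^ k) / 2"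
    using \<open>card B \<le> m\<close> DG by (simp add: divide_right_mono mult_right_mono)
  finally show ?thesis
    by simp
qed

end

section \<open>Choice of the level\<close>

lemma num_blocks_bounds:
  fixes T M :: nat
  assumes "1 \<le> T" "0 < M"
  shows "((T - 1) div M + 1) * M < T + M" and "T < 2 * M \<Longrightarrow> (T - 1) div M + 1 \<le> 2"
proof -
  have "((T - 1) div M + 1) * M = (T - 1) div M * M + M"
    by simp
  also have "(T - 1) div M * M \<le> T - 1"
    by simp
  finally show "((T - 1) div M + 1) * M < T + M"
    using assms by linarith
  assume "T < 2 * M"
  then have "(T - 1) div M < 2"
    using assms by (simp add: less_mult_imp_div_less mult.commute)
  then show "(T - 1) div M + 1 \<le> 2" by simp
qed

text \<open>\<open>k\<close> is the largest level with \<open>2\<^sup>k P \<le> 2 T D\<close>: intervals of length \<open>2\<^sup>k\<close> balance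
  the restart cost \<open>D G T / \<surd>2\<^sup>k\<close> against the path-length cost \<open>G \<surd>2\<^sup>k P\<close>.\<close>
lemma exists_level:
  fixes P D :: real and T :: nat
  assumes T: "1 \<le> T" and P: "0 \<le> P" "P \<le> T * D"
  obtains k where "2 ^ k \<le> T" "2 ^ k * P \<le> 2 * T * D"
    and "real ((T - 1) div 2 ^ k + 1) * 2 ^ k < T + 2 ^ k"
    and "(real T < 2 * 2 ^ k \<and> real ((T - 1) div 2 ^ k + 1) \<le> 2) \<or> T * D < 2 ^ k * P"
proof -
  define K where "K k \<longleftrightarrow> 2 ^ k \<le> T \<and> 2 ^ k * P \<le> 2 * T * D" for k
  define k where "k = Greatest K"
  have K_le: "k \<le> T" if "K k" for k
    using that less_exp[of k] unfolding K_def by linarith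
  have "K 0"
    using T P by (simp add: K_def)
  then have "K k" "\<not> K (Suc k)"
    using GreatestI_nat[of K 0 T] Greatest_le_nat[of K "Suc k" T] K_le by (force simp: k_def)+
  then have k: "2 ^ k \<le> T" "2 ^ k * P \<le> 2 * T * D" "2 * 2 ^ k \<le> T \<Longrightarrow> T * D < 2 ^ k * P"
    by (auto simp: K_def)
  have "real (((T - 1) div 2 ^ k + 1) * 2 ^ k) < real (T + 2 ^ k)"
    using num_blocks_bounds(1)[OF T, of "2 ^ k"] by (simp only: of_nat_less_iff) simp
  moreover have "(real T < 2 * 2 ^ k \<and> real ((T - 1) div 2 ^ k + 1) \<le> 2) \<or> T * D < 2 ^ k * P"
  proof (cases "T < 2 * 2 ^ k")
    case True
    then have "real T < real (2 * 2 ^ k)" "(T - 1) div 2 ^ k + 1 \<le> 2"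
      using num_blocks_bounds(2)[OF T, of "2 ^ k"] by (simp_all only: of_nat_less_iff)
    then show ?thesis by simp
  qed (use k(3) in simp)
  ultimately show thesis
    using k(1,2) by (intro that) (simp_all add: distrib_right)
qed

text \<open>In the remaining lemmas \<open>s = \<surd>2\<^sup>k\<close>, \<open>t = \<surd>T\<close>, \<open>m\<close> is the number of level-\<open>k\<close> intervals
  and \<open>P\<close> the path length.\<close>
lemma path_length_term_le:
  fixes s t P D :: real
  assumes "0 \<le> t" "0 \<le> D" "0 \<le> P" "s\<^sup>2 * P \<le> 2 * t\<^sup>2 * D"
  shows "s * P \<le> 3 / 2 * sqrt (D * P) * t"
proof (rule power2_le_imp_le)
  have "D * P \<ge> 0"
    using assms by simp
  have "(s * P)\<^sup>2 = s\<^sup>2 * P * P"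
    by (simp add: power2_eq_square)
  also have "\<dots> \<le> 2 * t\<^sup>2 * D * P"
    using assms by (intro mult_right_mono) auto
  also have "\<dots> \<le> 9 / 4 * (D * P) * t\<^sup>2"
    using mult_nonneg_nonneg[OF \<open>D * P \<ge> 0\<close> zero_le_power2[of t]] by (simp add: algebra_simps)
  also have "\<dots> = (3 / 2 * sqrt (D * P) * t)\<^sup>2"
    using \<open>D * P \<ge> 0\<close> by (simp add: power_mult_distrib power2_eq_square)
  finally show "(s * P)\<^sup>2 \<le> (3 / 2 * sqrt (D * P) * t)\<^sup>2" .
  show "0 \<le> 3 / 2 * sqrt (D * P) * t"
    using assms by simp
qed

lemma restart_terms_le_of_short_horizon:
  fixes m s t :: real
  assumes "0 < s" "s \<le> t" "t\<^sup>2 < 2 * s\<^sup>2" "m \<le> 2"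
  shows "m * s / 2 + t\<^sup>2 / (2 * s) \<le> 3 / 2 * t"
proof -
  have "t \<le> 2 * s"
  proof (rule ccontr)
    assume "\<not> t \<le> 2 * s"
    then have "(2 * s)\<^sup>2 \<le> t\<^sup>2"
      using assms by (intro power_mono) auto
    then show False
      using assms mult_pos_pos[OF assms(1) assms(1)] unfolding power2_eq_square by linarith
  qed
  then have "(2 * s - t) * (s - t) \<le> 0"
    using assms by (intro mult_nonneg_nonpos) auto
  then have "2 * s\<^sup>2 + t\<^sup>2 \<le> 3 * t * s"
    by (simp add: algebra_simps power2_eq_square)
  have "s + t\<^sup>2 / (2 * s) = (2 * s\<^sup>2 + t\<^sup>2) / (2 * s)"
    using assms by (simp add: field_simps power2_eq_square)
  also have "\<dots> \<le> 3 * t * s / (2 * s)"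
    using assms \<open>2 * s\<^sup>2 + t\<^sup>2 \<le> 3 * t * s\<close> by (intro divide_right_mono) auto
  also have "\<dots> = 3 / 2 * t"
    using assms by simp
  finally have "s + t\<^sup>2 / (2 * s) \<le> 3 / 2 * t" .
  moreover have "m * s / 2 \<le> s"
    using assms by simp
  ultimately show ?thesis by linarith
qed

lemma restart_terms_le_of_long_path:
  fixes m s t P D :: real
  assumes "0 < s" "s \<le> t" "0 < D" "0 \<le> P" "m * s\<^sup>2 < t\<^sup>2 + s\<^sup>2" "t\<^sup>2 * D < s\<^sup>2 * P"
  shows "D * (m * s / 2 + t\<^sup>2 / (2 * s)) \<le> D * t / 2 + sqrt (D * P) * t"
proof -
  have "D * (t\<^sup>2 / s) \<le> sqrt (D * P) * t"
  proof (rule power2_le_imp_le)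
    have "(D * (t\<^sup>2 / s))\<^sup>2 = D * (t\<^sup>2 * D) * t\<^sup>2 / s\<^sup>2"
      by (simp add: power2_eq_square)
    also have "\<dots> \<le> D * (s\<^sup>2 * P) * t\<^sup>2 / s\<^sup>2"
      using assms by (intro divide_right_mono mult_right_mono mult_left_mono) auto
    also have "\<dots> = (sqrt (D * P) * t)\<^sup>2"
      using assms by (simp add: power_mult_distrib)
    finally show "(D * (t\<^sup>2 / s))\<^sup>2 \<le> (sqrt (D * P) * t)\<^sup>2" .
  qed (use assms in simp)
  have "m * s / 2 = m * s\<^sup>2 / (2 * s)"
    using assms by (simp add: power2_eq_square)
  also have "\<dots> \<le> (t\<^sup>2 + s\<^sup>2) / (2 * s)"
    using assms by (intro divide_right_mono) auto
  also have "\<dots> = t\<^sup>2 / (2 * s) + s / 2"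
    using assms by (simp add: field_simps power2_eq_square)
  finally have "m * s / 2 + t\<^sup>2 / (2 * s) \<le> t\<^sup>2 / s + s / 2"
    by (simp add: field_simps)
  then have "D * (m * s / 2 + t\<^sup>2 / (2 * s)) \<le> D * (t\<^sup>2 / s + s / 2)"
    using assms by (intro mult_left_mono) auto
  also have "\<dots> = D * (t\<^sup>2 / s) + D * s / 2"
    by (simp add: distrib_left)
  also have "D * s / 2 \<le> D * t / 2"
    using assms by simp
  finally show ?thesis
    using \<open>D * (t\<^sup>2 / s) \<le> sqrt (D * P) * t\<close> by simp
qed

lemma num_blocks_le:
  fixes m s t P D :: real
  assumes "0 < s" "0 < D" "0 \<le> P" "m * s\<^sup>2 < t\<^sup>2 + s\<^sup>2"
    and "(t\<^sup>2 < 2 * s\<^sup>2 \<and> m \<le> 2) \<or> t\<^sup>2 * D < s\<^sup>2 * P"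
  shows "m \<le> 2 * (1 + 2 * P / D)"
proof -
  have "0 \<le> P / D" "2 * (1 + 2 * P / D) = 2 + 4 * (P / D)"
    using assms by simp_all
  moreover have "m \<le> 2 \<or> m < 1 + P / D"
    using assms(5)
  proof
    assume "t\<^sup>2 * D < s\<^sup>2 * P"
    then have "t\<^sup>2 < P / D * s\<^sup>2"
      using assms by (simp add: field_simps)
    then have "m * s\<^sup>2 < (1 + P / D) * s\<^sup>2"
      using assms by (simp add: algebra_simps)
    then show ?thesis
      using assms by simp
  qed simp
  ultimately show ?thesis by linarith
qed

lemma level_bound_le:
  fixes m s t P D G c :: real
  assumes "1 \<le> s" "s \<le> t" "0 < D" "0 < G" "0 \<le> c" "0 \<le> P"
    and "s\<^sup>2 * P \<le> 2 * t\<^sup>2 * D" "m * s\<^sup>2 < t\<^sup>2 + s\<^sup>2"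
    and "(t\<^sup>2 < 2 * s\<^sup>2 \<and> m \<le> 2) \<or> t\<^sup>2 * D < s\<^sup>2 * P"
  shows "sqrt (3 * c * m * t\<^sup>2) + m * D * G * s / 2 + G * s * P + D * G * t\<^sup>2 / (2 * s)
         \<le> (3 * D * G / 2 + 5 * G / 2 * sqrt (D * P) + sqrt (6 * c * (1 + 2 * P / D))) * t"
proof -
  have "0 \<le> sqrt (D * P) * t" "0 \<le> D * t"
    using assms by simp_all
  have "D * (m * s / 2 + t\<^sup>2 / (2 * s)) \<le> 3 / 2 * D * t + sqrt (D * P) * t"
    using assms(9)
  proof
    assume "t\<^sup>2 < 2 * s\<^sup>2 \<and> m \<le> 2"
    then have "D * (m * s / 2 + t\<^sup>2 / (2 * s)) \<le> D * (3 / 2 * t)"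
      using assms restart_terms_le_of_short_horizon[of s t m] by (intro mult_left_mono) auto
    then show ?thesis
      using \<open>0 \<le> sqrt (D * P) * t\<close> by simp
  next
    assume "t\<^sup>2 * D < s\<^sup>2 * P"
    then show ?thesis
      using assms restart_terms_le_of_long_path[of s t D P m] \<open>0 \<le> D * t\<close> by linarith
  qed
  then have restart: "m * D * G * s / 2 + D * G * t\<^sup>2 / (2 * s) \<le> G * (3 / 2 * D * t + sqrt (D * P) * t)"
    using assms mult_left_mono[of _ _ G] by (fastforce simp: algebra_simps)
  have "s * P \<le> 3 / 2 * sqrt (D * P) * t"
    using assms by (intro path_length_term_le) auto
  then have path: "G * s * P \<le> G * (3 / 2 * sqrt (D * P) * t)"
    using assms by (simp add: mult.assoc)
  have "m \<le> 2 * (1 + 2 * P / D)"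
    using assms by (intro num_blocks_le[of s D P m t]) auto
  then have "3 * c * m \<le> 3 * c * (2 * (1 + 2 * P / D))"
    using assms by (intro mult_left_mono) auto
  also have "\<dots> = 6 * c * (1 + 2 * P / D)"
    by simp
  finally have "sqrt (3 * c * m) * t \<le> sqrt (6 * c * (1 + 2 * P / D)) * t"
    using assms by (intro mult_right_mono real_sqrt_le_mono) auto
  moreover have "sqrt (3 * c * m * t\<^sup>2) = sqrt (3 * c * m) * t"
    using assms real_sqrt_mult[of "3 * c * m" "t\<^sup>2"] by simp
  ultimately have "sqrt (3 * c * m * t\<^sup>2) \<le> sqrt (6 * c * (1 + 2 * P / D)) * t"
    by simp
  with restart path show ?thesis
    by (simp add: algebra_simps)
qed

theorem theorem4:
  fixes \<Omega> :: "'a::euclidean_space set"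
    and f :: "nat \<Rightarrow> 'a \<Rightarrow> real"
    and g :: "nat \<Rightarrow> 'a \<Rightarrow> 'a"
    and D G :: real and T :: nat
    and init :: "nat \<Rightarrow> 'a"
    and u :: "nat \<Rightarrow> 'a"
  assumes T: "T \<ge> 1"
    and DG: "D > 0" "G > 0"
    and cvx: "convex \<Omega>" and cl: "closed \<Omega>"
    and zero: "0 \<in> \<Omega>"
    and diam: "\<forall>w\<in>\<Omega>. \<forall>w'\<in>\<Omega>. norm (w - w') \<le> D"
    and fconv: "\<forall>t\<in>{1..T}. convex_on \<Omega> (f t)"
    and subgrad: "\<forall>t\<in>{1..T}. \<forall>w\<in>\<Omega>. \<forall>v\<in>\<Omega>. f t v \<ge> f t w + g t w \<bullet> (v - w)"
    and gbound: "\<forall>t\<in>{1..T}. \<forall>w\<in>\<Omega>. norm (g t w) \<le> G"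
    and frange: "\<forall>t\<in>{1..T}. \<forall>w\<in>\<Omega>. 0 \<le> f t w \<and> f t w \<le> 1"
    and init: "\<forall>k. init k \<in> \<Omega>"
    and u: "\<forall>t\<in>{1..T+1}. u t \<in> \<Omega>"
  shows "(\<Sum>t=1..T. f t (aod \<Omega> f g D G init T t)) - (\<Sum>t=1..T. f t (u t))
         \<le> (3 * D * G / 2
             + 5 * G / 2 * sqrt (D * (\<Sum>t=1..T. norm (u (t + 1) - u t)))
             + sqrt (6 * cT T * (1 + 2 * (\<Sum>t=1..T. norm (u (t + 1) - u t)) / D)))
           * sqrt (real T)"
proof -
  interpret aod_dynamic_setting \<Omega> f g D G T init u
    using assms by unfold_locales auto
  define P where "P = (\<Sum>t = 1..T. norm (u (t + 1) - u t))"
  have "0 \<le> P"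
    by (simp add: P_def sum_nonneg)
  moreover have "P \<le> T * D"
    using sum_mono[of "{1..T}" "\<lambda>t. norm (u (t + 1) - u t)" "\<lambda>_. D"] diam u by (simp add: P_def)
  ultimately obtain k where k: "2 ^ k \<le> T" "2 ^ k * P \<le> 2 * T * D"
    "real ((T - 1) div 2 ^ k + 1) * 2 ^ k < T + 2 ^ k"
    "(real T < 2 * 2 ^ k \<and> real ((T - 1) div 2 ^ k + 1) \<le> 2) \<or> T * D < 2 ^ k * P"
    using exists_level[OF T] by blast
  define m where "m = real ((T - 1) div 2 ^ k + 1)"
  have "sqrt (3 * cT T * m * (sqrt T)\<^sup>2) + m * D * G * sqrt (2 ^ k) / 2 + G * sqrt (2 ^ k) * P
        + D * G * (sqrt T)\<^sup>2 / (2 * sqrt (2 ^ k))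
      \<le> (3 * D * G / 2 + 5 * G / 2 * sqrt (D * P) + sqrt (6 * cT T * (1 + 2 * P / D))) * sqrt T"
    using k DG \<open>0 \<le> P\<close> cT_nonneg[OF T] by (intro level_bound_le) (auto simp: m_def)
  then show ?thesis
    using level_regret_le[OF k(1)] by (simp add: P_def m_def)
qed

end
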